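(* If $G$ is a connected triangle-free graph on $n\ge 3$ vertices, then $\gamma_{rdR}(G)\le 2\gamma_{rR}(G)-2$.
   Context: All graphs are finite and simple. An RDRD function of $G$ is a function $f:V(G)\to\{0,1,2,3\}$ such that every vertex with value $0$ has at least two neighbors with value $2$ or at least one neighbor with value $3$, every vertex with value $1$ has a neighbor with value $2$ or $3$, and the subgraph induced by the vertices with value $0$ has no isolated vertices; $\gamma_{rdR}(G)$ is the minimum of $\sum_v f(v)$ over RDRD functions. A restrained Roman dominating function (RRD function) of $G$ is a function $f:V(G)\to\{0,1,2\}$ such that every vertex with value $0$ has a neighbor with value $2$, and the subgraph induced by the vertices with value $0$ has no isolated vertices; $\gamma_{rR}(G)$ is the minimum of $\sum_v f(v)$ over RRD functions. *)

theory Defs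
  imports Main
begin

definition simple_graph :: "'a set \<Rightarrow> ('a \<Rightarrow> 'a \<Rightarrow> bool) \<Rightarrow> bool" where
  "simple_graph V E \<longleftrightarrow> finite V \<and> (\<forall>x y. E x y \<longrightarrow> x \<in> V \<and> y \<in> V)
     \<and> (\<forall>x y. E x y \<longrightarrow> E y x) \<and> (\<forall>x. \<not> E x x)"

definition connected_graph :: "'a set \<Rightarrow> ('a \<Rightarrow> 'a \<Rightarrow> bool) \<Rightarrow> bool" where
  "connected_graph V E \<longleftrightarrow> V \<noteq> {} \<and> (\<forall>x\<in>V. \<forall>y\<in>V. E\<^sup>*\<^sup>* x y)"

definition triangle_free :: "'a set \<Rightarrow> ('a \<Rightarrow> 'a \<Rightarrow> bool) \<Rightarrow> bool" where
  "triangle_free V E \<longleftrightarrow> \<not> (\<exists>x\<in>V. \<exists>y\<in>V. \<exists>z\<in>V. E x y \<and> E y z \<and> E x z)"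

definition is_RDRDF :: "'a set \<Rightarrow> ('a \<Rightarrow> 'a \<Rightarrow> bool) \<Rightarrow> ('a \<Rightarrow> nat) \<Rightarrow> bool" where
  "is_RDRDF V E f \<longleftrightarrow>
     (\<forall>v\<in>V. f v \<le> 3) \<and>
     (\<forall>v\<in>V. f v = 0 \<longrightarrow>
        ((\<exists>u\<in>V. \<exists>w\<in>V. u \<noteq> w \<and> E v u \<and> E v w \<and> f u = 2 \<and> f w = 2)
         \<or> (\<exists>u\<in>V. E v u \<and> f u = 3))) \<and>
     (\<forall>v\<in>V. f v = 1 \<longrightarrow> (\<exists>u\<in>V. E v u \<and> f u \<ge> 2)) \<and>
     (\<forall>v\<in>V. f v = 0 \<longrightarrow> (\<exists>u\<in>V. E v u \<and> f u = 0))"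

definition is_RRDF :: "'a set \<Rightarrow> ('a \<Rightarrow> 'a \<Rightarrow> bool) \<Rightarrow> ('a \<Rightarrow> nat) \<Rightarrow> bool" where
  "is_RRDF V E f \<longleftrightarrow>
     (\<forall>v\<in>V. f v \<le> 2) \<and>
     (\<forall>v\<in>V. f v = 0 \<longrightarrow> (\<exists>u\<in>V. E v u \<and> f u = 2)) \<and>
     (\<forall>v\<in>V. f v = 0 \<longrightarrow> (\<exists>u\<in>V. E v u \<and> f u = 0))"

definition gamma_rdR :: "'a set \<Rightarrow> ('a \<Rightarrow> 'a \<Rightarrow> bool) \<Rightarrow> nat" where
  "gamma_rdR V E = (LEAST w. \<exists>f. is_RDRDF V E f \<and> w = (\<Sum>v\<in>V. f v))"

definition gamma_rR :: "'a set \<Rightarrow> ('a \<Rightarrow> 'a \<Rightarrow> bool) \<Rightarrow> nat" where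
  "gamma_rR V E = (LEAST w. \<exists>f. is_RRDF V E f \<and> w = (\<Sum>v\<in>V. f v))"

end

theory Submission
  imports Defs
begin

text \<open>Take a minimum restrained Roman dominating function f. If f assigns 2 to at least two
vertices, replacing the values 1, 2 by 2, 3 gives an RDRD function of weight
2 w(f) - #\{f = 2\} \<le> 2 w(f) - 2. Otherwise f has no zeros: a vertex of value 0 has a
neighbour of value 0, and both would be adjacent to the unique vertex of value 2, forming
a triangle. Then w(f) \<ge> n, and putting 1 on the ends of a path a-b-c and 2 everywhere else
gives an RDRD function of weight 2n - 2.\<close>

lemma gamma_rR_attained:
  obtains f where "is_RRDF V E f" and "gamma_rR V E = (\<Sum>v\<in>V. f v)"
proof -
  have "is_RRDF V E (\<lambda>_. 1)" by (simp add: is_RRDF_def)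
  then have "\<exists>w f. is_RRDF V E f \<and> w = (\<Sum>v\<in>V. f v)" by blast
  from LeastI_ex[OF this] show ?thesis
    using that unfolding gamma_rR_def by blast
qed

lemma gamma_rdR_le:
  assumes "is_RDRDF V E g"
  shows "gamma_rdR V E \<le> (\<Sum>v\<in>V. g v)"
  unfolding gamma_rdR_def by (rule Least_le) (use assms in blast)

definition double_RRDF :: "('a \<Rightarrow> nat) \<Rightarrow> 'a \<Rightarrow> nat" where
  "double_RRDF f v = (if f v = 0 then 0 else f v + 1)"

lemma is_RDRDF_double_RRDF:
  assumes "is_RRDF V E f"
  shows "is_RDRDF V E (double_RRDF f)"
proof -
  have "f v \<le> 2" if "v \<in> V" for v using assms that unfolding is_RRDF_def by blast
  then show ?thesis
    using assms unfolding is_RDRDF_def is_RRDF_def double_RRDF_def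
    by (auto simp: le_Suc_eq) fastforce+
qed

lemma sum_double_RRDF:
  assumes "finite V" and "is_RRDF V E f"
  shows "(\<Sum>v\<in>V. double_RRDF f v) + card {v\<in>V. f v = 2} = 2 * (\<Sum>v\<in>V. f v)"
proof -
  have pointwise: "double_RRDF f v + (if f v = 2 then 1 else 0) = 2 * f v" if "v \<in> V" for v
  proof -
    have "f v \<le> 2" using assms(2) that unfolding is_RRDF_def by blast
    then show ?thesis unfolding double_RRDF_def by auto
  qed
  have "card {v\<in>V. f v = 2} = (\<Sum>v\<in>V. if f v = 2 then 1 else 0)"
    using assms(1) by (simp add: sum.If_cases Int_def)
  then have "(\<Sum>v\<in>V. double_RRDF f v) + card {v\<in>V. f v = 2}
      = (\<Sum>v\<in>V. double_RRDF f v + (if f v = 2 then 1 else 0))"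
    by (simp add: sum.distrib)
  also have "\<dots> = (\<Sum>v\<in>V. 2 * f v)" by (rule sum.cong) (simp_all add: pointwise)
  finally show ?thesis by (simp add: sum_distrib_left)
qed

lemma gamma_rdR_le_doubled_RRDF:
  assumes "finite V" and "is_RRDF V E f"
  shows "gamma_rdR V E + card {v\<in>V. f v = 2} \<le> 2 * (\<Sum>v\<in>V. f v)"
  using gamma_rdR_le[OF is_RDRDF_double_RRDF[OF assms(2)]] sum_double_RRDF[OF assms]
  by linarith

lemma RRDF_positive_if_unique_two:
  assumes "simple_graph V E" and "triangle_free V E" and "is_RRDF V E f"
    and unique_two: "card {v\<in>V. f v = 2} \<le> 1"
    and "v \<in> V"
  shows "f v \<noteq> 0"
proof
  assume "f v = 0"
  have "finite V" using assms(1) by (simp add: simple_graph_def)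
  then have two_eq: "u = u'" if "u \<in> V" "u' \<in> V" "f u = 2" "f u' = 2" for u u'
    using unique_two that card_le_Suc0_iff_eq[of "{v\<in>V. f v = 2}"] by auto
  obtain x where x: "x \<in> V" "E v x" "f x = 0"
    using assms(3,5) \<open>f v = 0\<close> unfolding is_RRDF_def by blast
  obtain u where u: "u \<in> V" "E v u" "f u = 2"
    using assms(3,5) \<open>f v = 0\<close> unfolding is_RRDF_def by blast
  obtain u' where u': "u' \<in> V" "E x u'" "f u' = 2"
    using assms(3) x unfolding is_RRDF_def by blast
  have "E x u" using u' two_eq[OF u(1) u'(1) u(3) u'(3)] by simp
  then show False
    using assms(2,5) x u unfolding triangle_free_def by blast
qed

lemma connected_graph_obtains_path3:
  assumes "simple_graph V E" and "connected_graph V E" and "card V \<ge> 3"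
  obtains a b c where "E a b" and "E b c" and "a \<noteq> c"
proof (rule ccontr)
  assume "\<not> thesis"
  with that have no_path3: "E a b \<Longrightarrow> E b c \<Longrightarrow> a = c" for a b c by blast
  have sym: "E x y \<Longrightarrow> E y x" for x y
    using assms(1) by (simp add: simple_graph_def)
  obtain x where "x \<in> V" using assms(2) by (auto simp: connected_graph_def)
  have near_x: "z = x \<or> E x z" if "z \<in> V" for z
  proof -
    have "E\<^sup>*\<^sup>* x z" using assms(2) \<open>x \<in> V\<close> that by (simp add: connected_graph_def)
    then show ?thesis
      by (induction rule: rtranclp_induct) (use no_path3 in blast)+
  qed
  have "V \<noteq> {x}" using assms(3) by auto
  then obtain z where "z \<in> V" "z \<noteq> x" using \<open>x \<in> V\<close> by blast
  then have "E z x" using near_x sym by blast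
  have "V \<subseteq> {x, z}"
    using near_x no_path3[OF \<open>E z x\<close>] by blast
  then have "card V \<le> 2"
    using card_mono[of "{x, z}" V] by (simp add: card_insert_if split: if_splits)
  then show False using assms(3) by simp
qed

lemma gamma_rdR_le_path3:
  assumes "simple_graph V E" and "E a b" and "E b c" and "a \<noteq> c"
  shows "gamma_rdR V E + 2 \<le> 2 * card V"
proof -
  define g where "g v = (if v = a \<or> v = c then 1 else (2::nat))" for v
  have inV: "a \<in> V" "b \<in> V" "c \<in> V" and "E c b" and "b \<noteq> a" "b \<noteq> c"
    using assms unfolding simple_graph_def by metis+
  then have "is_RDRDF V E g"
    using \<open>E a b\<close> unfolding is_RDRDF_def g_def by auto
  moreover have "(\<Sum>v\<in>V. g v) + 2 = 2 * card V"
  proof -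
    have "finite V" using assms(1) by (simp add: simple_graph_def)
    have "V \<inter> {v. v \<in> {a, c}} = {a, c}" using inV by blast
    then have "(\<Sum>v\<in>V. g v) + card {a, c} = (\<Sum>v\<in>V. g v + (if v \<in> {a, c} then 1 else 0))"
      using \<open>finite V\<close> by (simp add: sum.distrib sum.If_cases)
    also have "\<dots> = (\<Sum>v\<in>V. 2)" by (rule sum.cong) (auto simp: g_def)
    finally show ?thesis using assms(4) by simp
  qed
  ultimately show ?thesis using gamma_rdR_le by fastforce
qed

theorem proposition2p7:
  fixes V :: "'a set" and E :: "'a \<Rightarrow> 'a \<Rightarrow> bool"
  assumes "simple_graph V E"
    and "connected_graph V E"
    and "triangle_free V E"
    and "card V \<ge> 3"
  shows "gamma_rdR V E \<le> 2 * gamma_rR V E - 2"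
proof -
  have "finite V" using assms(1) by (simp add: simple_graph_def)
  obtain f where f: "is_RRDF V E f" and w: "gamma_rR V E = (\<Sum>v\<in>V. f v)"
    by (rule gamma_rR_attained)
  show ?thesis
  proof (cases "card {v\<in>V. f v = 2} \<ge> 2")
    case True
    then show ?thesis using gamma_rdR_le_doubled_RRDF[OF \<open>finite V\<close> f] w by linarith
  next
    case False
    then have "f v \<ge> 1" if "v \<in> V" for v
      using RRDF_positive_if_unique_two[OF assms(1,3) f _ that] by fastforce
    then have "card V \<le> gamma_rR V E"
      unfolding w using sum_mono[of V "\<lambda>_. 1" f] by simp
    moreover obtain a b c where "E a b" "E b c" "a \<noteq> c"
      using connected_graph_obtains_path3[OF assms(1,2,4)] .
    ultimately show ?thesis using gamma_rdR_le_path3[OF assms(1)] by fastforce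
  qed
qed

end
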